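(* Let $\Gamma(V,E)$ be a finite undirected simple graph, let $V_1$ be the set of vertices of degree at least $1$, let $\Gamma^{(0)}=\Gamma(V\setminus V_1)$ be the induced subgraph on the isolated vertices, and let $\Gamma^{(1)},\dots,\Gamma^{(k)}$ be the connected components of the induced subgraph $\Gamma(V_1)$. For $i=0,1,\dots,k$ let $H^{(i)}=G_{\Gamma^{(i)}}\gamma_2(G_\Gamma)$, i.e. the subgroup of $G_\Gamma$ consisting of the elements $\prod_j (x^{(i)}_j)^{z_j}\prod_{l=1}^N y_l^{t_l}$ with $z_j,t_l\in\mathbb{Z}$, where $x^{(i)}_j$ runs over the vertices of $\Gamma^{(i)}$. Then for every automorphism $\varphi$ of $G_\Gamma$ there exists a unique permutation $\sigma\in S_k$ such that (i) $\varphi(H^{(i)})=H^{(\sigma(i))}$ for all $i=1,\dots,k$, and (ii) $\Gamma^{(i)}\cong\Gamma^{(\sigma(i))}$ for all $i=1,\dots,k$.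
   Context: For a finite undirected simple graph $\Gamma$ with vertex set $\{x_1,\dots,x_n\}$ and edge set $E$, the group $G_\Gamma$ is defined by the presentation with generators $x_1,\dots,x_n$ and $y_{i,j}$ for each pair $i<j$ with $x_ix_j\notin E$, and relations $[x_j,x_i]=1$ if $x_ix_j\in E$; $[x_j,x_i]=y_{i,j}$ if $x_ix_j\notin E$ and $i<j$; and $[x_l,y_{i,j}]=1$ for all $l$ and all such $y_{i,j}$. $N$ is the number of non-adjacent pairs, the $y_{i,j}$ are enumerated $y_1,\dots,y_N$, and $\gamma_2(G_\Gamma)=[G_\Gamma,G_\Gamma]$ is generated by them. $\Gamma(V')$ denotes the induced subgraph on $V'$, and for a subgraph $\Gamma'$ of $\Gamma$, $G_{\Gamma'}$ is viewed as the subgroup of $G_\Gamma$ generated by the vertices of $\Gamma'$. *)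

theory Defs
  imports "HOL-Combinatorics.Permutations" "HOL-Algebra.Group"
begin

text \<open>Finite simple graph on the vertex set {0..<n} (vertex x_{i+1} is i).\<close>
definition simple_graph :: "nat \<Rightarrow> (nat \<Rightarrow> nat \<Rightarrow> bool) \<Rightarrow> bool" where
  "simple_graph n E \<longleftrightarrow> (\<forall>u v. E u v \<longrightarrow> u < n \<and> v < n)
      \<and> (\<forall>u v. E u v \<longleftrightarrow> E v u) \<and> (\<forall>u. \<not> E u u)"

text \<open>Non-adjacent pairs (i,j), i<j: the indices of the generators y_{i,j}.\<close>
definition nonedges :: "nat \<Rightarrow> (nat \<Rightarrow> nat \<Rightarrow> bool) \<Rightarrow> (nat \<times> nat) set" where
  "nonedges n E = {(i, j). i < j \<and> j < n \<and> \<not> E i j}"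

text \<open>The group G_Gamma in normal form: the pair (z,t) stands for
  x_0^{z_0} ... x_{n-1}^{z_{n-1}} * prod y_{ij}^{t(i,j)}.  Multiplication follows from
  x_j x_i = x_i x_j y_{ij} (i<j, non-adjacent) with the y_{ij} central.\<close>
definition G_mult :: "nat \<Rightarrow> (nat \<Rightarrow> nat \<Rightarrow> bool) \<Rightarrow> (nat \<Rightarrow> int) \<times> (nat \<times> nat \<Rightarrow> int)
    \<Rightarrow> (nat \<Rightarrow> int) \<times> (nat \<times> nat \<Rightarrow> int) \<Rightarrow> (nat \<Rightarrow> int) \<times> (nat \<times> nat \<Rightarrow> int)" where
  "G_mult n E a b = (\<lambda>j. fst a j + fst b j,
     \<lambda>p. snd a p + snd b p + (if p \<in> nonedges n E then fst a (snd p) * fst b (fst p) else 0))"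

definition G_Gamma :: "nat \<Rightarrow> (nat \<Rightarrow> nat \<Rightarrow> bool) \<Rightarrow> ((nat \<Rightarrow> int) \<times> (nat \<times> nat \<Rightarrow> int)) monoid" where
  "G_Gamma n E = \<lparr> carrier = {a. (\<forall>j. n \<le> j \<longrightarrow> fst a j = 0) \<and> (\<forall>p. p \<notin> nonedges n E \<longrightarrow> snd a p = 0)},
     mult = G_mult n E, one = (\<lambda>_. 0, \<lambda>_. 0) \<rparr>"

definition V1 :: "nat \<Rightarrow> (nat \<Rightarrow> nat \<Rightarrow> bool) \<Rightarrow> nat set" where
  "V1 n E = {v. v < n \<and> (\<exists>u. E u v)}"

definition comp_of :: "nat \<Rightarrow> (nat \<Rightarrow> nat \<Rightarrow> bool) \<Rightarrow> nat \<Rightarrow> nat set" where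
  "comp_of n E v = {u \<in> V1 n E. (\<lambda>a b. a \<in> V1 n E \<and> b \<in> V1 n E \<and> E a b)\<^sup>*\<^sup>* v u}"

definition components :: "nat \<Rightarrow> (nat \<Rightarrow> nat \<Rightarrow> bool) \<Rightarrow> nat set set" where
  "components n E = comp_of n E ` V1 n E"

definition induced_iso :: "(nat \<Rightarrow> nat \<Rightarrow> bool) \<Rightarrow> nat set \<Rightarrow> nat set \<Rightarrow> bool" where
  "induced_iso E A B \<longleftrightarrow> (\<exists>f. bij_betw f A B \<and> (\<forall>u\<in>A. \<forall>v\<in>A. E u v \<longleftrightarrow> E (f u) (f v)))"

definition H_sub :: "nat \<Rightarrow> (nat \<Rightarrow> nat \<Rightarrow> bool) \<Rightarrow> nat set \<Rightarrow> ((nat \<Rightarrow> int) \<times> (nat \<times> nat \<Rightarrow> int)) set" where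
  "H_sub n E C = {a \<in> carrier (G_Gamma n E). \<forall>j. fst a j \<noteq> 0 \<longrightarrow> j \<in> C}"

end

theory Submission
  imports Defs "HOL.Rat"
begin

text \<open>
  Every endomorphism \<open>f\<close> of \<open>G_Gamma n E\<close> maps \<open>\<gamma>\<^sub>2\<close> into itself, so it induces an integer
  matrix \<open>M\<close> on the abelianisation \<open>\<int>\<^sup>n\<close>. The images of adjacent generators commute, and
  the \<open>y\<^sub>a\<^sub>b\<close>-coordinate of a commutator is a \<open>2 \<times> 2\<close> minor of the \<open>x\<close>-parts; hence the minor of
  \<open>M\<close> in columns \<open>u, v\<close> and rows \<open>a, b\<close> vanishes whenever \<open>u v\<close> is an edge and \<open>a b\<close> is not.
  For an automorphism \<open>M\<close> is invertible, and the vanishing minors force the columns of each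
  component of \<open>\<Gamma>(V\<^sub>1)\<close> to be supported in a single component; this yields the permutation
  and the images of the subgroups \<open>H\<close>. The corresponding diagonal block of \<open>M\<close> is again
  invertible with vanishing minors. Eliminating one pivot at a time shows that every column
  vertex has at most the degree of its pivot row vertex, so the row component has at least as
  many edges; by symmetry the edge counts agree, and then the pivots form a graph isomorphism.
\<close>

section \<open>Inverse matrices and Schur complements\<close>

definition inverse_matrices ::
    "'i set \<Rightarrow> 'j set \<Rightarrow> ('i \<Rightarrow> 'j \<Rightarrow> 'a::comm_ring_1) \<Rightarrow> ('j \<Rightarrow> 'i \<Rightarrow> 'a) \<Rightarrow> bool" where
  "inverse_matrices R C A B \<longleftrightarrow>
     (\<forall>i\<in>R. \<forall>l\<in>R. (\<Sum>k\<in>C. A i k * B k l) = (if i = l then 1 else 0)) \<and>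
     (\<forall>j\<in>C. \<forall>l\<in>C. (\<Sum>k\<in>R. B j k * A k l) = (if j = l then 1 else 0))"

lemma inverse_matrices_commute: "inverse_matrices R C A B = inverse_matrices C R B A"
  unfolding inverse_matrices_def by auto

lemma inverse_matrices_empty:
  assumes "inverse_matrices R {} A B"
  shows "R = {}"
proof (rule equals0I)
  fix i assume "i \<in> R"
  with assms have "(\<Sum>k\<in>{}. A i k * B k i) = (if i = i then 1 else 0)"
    unfolding inverse_matrices_def by blast
  then show False
    by simp
qed

lemma inverse_matrices_pivot:
  assumes "inverse_matrices R C A B" "j \<in> C"
  obtains i where "i \<in> R" "A i j \<noteq> 0" "B j i \<noteq> 0"
proof -
  have "(\<Sum>k\<in>R. B j k * A k j) = 1"
    using assms unfolding inverse_matrices_def by auto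
  then have "\<exists>i\<in>R. B j i * A i j \<noteq> 0"
    by (metis (mono_tags, lifting) sum.neutral zero_neq_one)
  then show thesis
    using that mult_not_zero by blast
qed

definition schur_complement :: "('i \<Rightarrow> 'j \<Rightarrow> 'a::field) \<Rightarrow> 'i \<Rightarrow> 'j \<Rightarrow> 'i \<Rightarrow> 'j \<Rightarrow> 'a" where
  "schur_complement A i j r x = A r x - A r j * A i x / A i j"

lemma inverse_matrices_schur_complement:
  assumes inv: "inverse_matrices R C A B" and "finite R" "finite C"
    and "i \<in> R" "j \<in> C" and pivot: "A i j \<noteq> 0"
  shows "inverse_matrices (R - {i}) (C - {j}) (schur_complement A i j) B"
proof -
  have AB: "(\<Sum>k\<in>C. A r k * B k l) = (if r = l then 1 else 0)" if "r \<in> R" "l \<in> R" for r l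
    using inv that unfolding inverse_matrices_def by auto
  have BA: "(\<Sum>k\<in>R. B x k * A k l) = (if x = l then 1 else 0)" if "x \<in> C" "l \<in> C" for x l
    using inv that unfolding inverse_matrices_def by auto
  have "(\<Sum>x\<in>C - {j}. schur_complement A i j r x * B x y) = (if r = y then 1 else 0)"
    if "r \<in> R - {i}" "y \<in> R - {i}" for r y
  proof -
    have "(\<Sum>x\<in>C - {j}. schur_complement A i j r x * B x y)
        = (\<Sum>x\<in>C - {j}. A r x * B x y) - A r j / A i j * (\<Sum>x\<in>C - {j}. A i x * B x y)"
      by (simp add: schur_complement_def algebra_simps sum_subtractf sum_distrib_left)
    also have "\<dots> = (if r = y then 1 else 0)"
      using AB[of r y] AB[of i y] that assms by (auto simp: sum_diff1)
    finally show ?thesis .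
  qed
  moreover have "(\<Sum>y\<in>R - {i}. B x y * schur_complement A i j y l) = (if x = l then 1 else 0)"
    if "x \<in> C - {j}" "l \<in> C - {j}" for x l
  proof -
    have "(\<Sum>y\<in>R - {i}. B x y * schur_complement A i j y l)
        = (\<Sum>y\<in>R - {i}. B x y * A y l) - A i l / A i j * (\<Sum>y\<in>R - {i}. B x y * A y j)"
      by (simp add: schur_complement_def algebra_simps sum_subtractf sum_distrib_left)
    also have "\<dots> = (if x = l then 1 else 0)"
      using BA[of x l] BA[of x j] that assms by (simp add: sum_diff1)
    finally show ?thesis .
  qed
  ultimately show ?thesis
    unfolding inverse_matrices_def by blast
qed

text \<open>Eliminating a pivot of \<open>B\<close> instead of \<open>A\<close> leaves \<open>A\<close>, and with it every property of the
  entries of \<open>A\<close>, untouched; this is what makes the inductions below work.\<close>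
lemma inverse_matrices_remove_column:
  fixes A :: "'i \<Rightarrow> 'j \<Rightarrow> 'a::field"
  assumes "inverse_matrices R (insert x F) A B" "finite R" "finite F" "x \<notin> F"
  obtains i where "i \<in> R" "A i x \<noteq> 0" "inverse_matrices (R - {i}) F A (schur_complement B x i)"
proof -
  obtain i where i: "i \<in> R" "A i x \<noteq> 0" "B x i \<noteq> 0"
    using inverse_matrices_pivot[OF assms(1)] by blast
  have "inverse_matrices (insert x F) R B A"
    using assms(1) by (rule inverse_matrices_commute[THEN iffD1])
  then have "inverse_matrices (insert x F - {x}) (R - {i}) (schur_complement B x i) A"
    using assms(2,3) i by (intro inverse_matrices_schur_complement) simp_all
  then have "inverse_matrices (R - {i}) F A (schur_complement B x i)"
    using assms(4) inverse_matrices_commute by fastforce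
  with i that show thesis
    by blast
qed

lemma bij_betw_fun_upd_insert:
  assumes "bij_betw \<sigma> F (R - {i})" "x \<notin> F" "i \<in> R"
  shows "bij_betw (\<sigma>(x := i)) (insert x F) R"
proof -
  have "bij_betw (\<sigma>(x := i)) F (R - {i})"
    using assms(1) by (rule bij_betw_cong[THEN iffD1, rotated]) (use assms(2) in auto)
  then have "bij_betw (\<sigma>(x := i)) (F \<union> {x}) ((R - {i}) \<union> {(\<sigma>(x := i)) x})"
    by (intro notIn_Un_bij_betw[OF assms(2)]) auto
  moreover have "F \<union> {x} = insert x F" "(R - {i}) \<union> {(\<sigma>(x := i)) x} = R"
    using assms(3) by auto
  ultimately show ?thesis
    by simp
qed

lemma inverse_matrices_transversal:
  fixes A :: "'i \<Rightarrow> 'j \<Rightarrow> 'a::field"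
  assumes "finite C" "finite R" "inverse_matrices R C A B"
  shows "\<exists>\<pi>. bij_betw \<pi> C R \<and> (\<forall>j\<in>C. A (\<pi> j) j \<noteq> 0)"
  using assms
proof (induction C arbitrary: R B rule: finite_induct)
  case empty
  then have "R = {}"
    using inverse_matrices_empty by blast
  then show ?case
    by (simp add: bij_betw_def)
next
  case (insert x F)
  obtain i where i: "i \<in> R" "A i x \<noteq> 0"
    and "inverse_matrices (R - {i}) F A (schur_complement B x i)"
    using inverse_matrices_remove_column[OF insert.prems(2,1) insert.hyps(1,2)] by blast
  then obtain \<sigma> where \<sigma>: "bij_betw \<sigma> F (R - {i})" "\<forall>j\<in>F. A (\<sigma> j) j \<noteq> 0"
    using insert.IH insert.prems(1) by blast
  then have "bij_betw (\<sigma>(x := i)) (insert x F) R" "\<forall>j\<in>insert x F. A ((\<sigma>(x := i)) j) j \<noteq> 0"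
    using bij_betw_fun_upd_insert[OF \<sigma>(1) insert.hyps(2) i(1)] insert.hyps(2) i(2) by auto
  then show ?case
    by blast
qed

section \<open>Vanishing edge minors and induced isomorphisms\<close>

definition edge_minors_vanish ::
    "('v \<Rightarrow> 'v \<Rightarrow> bool) \<Rightarrow> 'v set \<Rightarrow> 'v set \<Rightarrow> ('v \<Rightarrow> 'v \<Rightarrow> 'a::times) \<Rightarrow> bool" where
  "edge_minors_vanish E C R A \<longleftrightarrow> (\<forall>u\<in>C. \<forall>v\<in>C. E u v \<longrightarrow>
      (\<forall>a\<in>R. \<forall>b\<in>R. a \<noteq> b \<longrightarrow> \<not> E a b \<longrightarrow> A a u * A b v = A a v * A b u))"

definition neighbours :: "('v \<Rightarrow> 'v \<Rightarrow> bool) \<Rightarrow> 'v set \<Rightarrow> 'v \<Rightarrow> 'v set" where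
  "neighbours E S x = {w \<in> S. E x w}"

definition edge_count :: "('v \<Rightarrow> 'v \<Rightarrow> bool) \<Rightarrow> 'v set \<Rightarrow> nat" where
  "edge_count E S = card {(u, v) \<in> S \<times> S. E u v}"

definition iso_betw :: "('v \<Rightarrow> 'v \<Rightarrow> bool) \<Rightarrow> ('v \<Rightarrow> 'v) \<Rightarrow> 'v set \<Rightarrow> 'v set \<Rightarrow> bool" where
  "iso_betw E f A B \<longleftrightarrow> bij_betw f A B \<and> (\<forall>u\<in>A. \<forall>v\<in>A. E u v \<longleftrightarrow> E (f u) (f v))"

lemma edge_minors_vanishD:
  assumes "edge_minors_vanish E C R A" "u \<in> C" "v \<in> C" "E u v"
    and "a \<in> R" "b \<in> R" "a \<noteq> b" "\<not> E a b"
  shows "A a u * A b v = A a v * A b u"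
  using assms unfolding edge_minors_vanish_def by blast

lemma edge_minors_vanish_mono:
  "edge_minors_vanish E C R A \<Longrightarrow> C' \<subseteq> C \<Longrightarrow> R' \<subseteq> R \<Longrightarrow> edge_minors_vanish E C' R' A"
  unfolding edge_minors_vanish_def by blast

lemma finite_neighbours: "finite S \<Longrightarrow> finite (neighbours E S x)"
  unfolding neighbours_def by simp

text \<open>The Schur complement at the pivot \<open>(i, j)\<close> vanishes at every row that is not adjacent to
  \<open>i\<close> and every column adjacent to \<open>j\<close>, so a transversal of it maps neighbours of \<open>j\<close>
  to neighbours of \<open>i\<close>.\<close>
lemma edge_minors_vanish_degree_le:
  fixes A :: "'v \<Rightarrow> 'v \<Rightarrow> 'a::field"
  assumes "finite C" "finite R" and inv: "inverse_matrices R C A B"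
    and vanish: "edge_minors_vanish E C R A" and irrefl: "\<And>x. \<not> E x x"
    and i: "i \<in> R" and j: "j \<in> C" and pivot: "A i j \<noteq> 0"
  shows "card (neighbours E C j) \<le> card (neighbours E R i)"
proof -
  have "inverse_matrices (R - {i}) (C - {j}) (schur_complement A i j) B"
    using inv assms(2,1) i j pivot by (rule inverse_matrices_schur_complement)
  then have "\<exists>\<tau>. bij_betw \<tau> (C - {j}) (R - {i}) \<and> (\<forall>w\<in>C - {j}. schur_complement A i j (\<tau> w) w \<noteq> 0)"
    using assms(1,2) by (intro inverse_matrices_transversal) simp_all
  then obtain \<tau> where \<tau>: "bij_betw \<tau> (C - {j}) (R - {i})"
    and nz: "\<forall>w\<in>C - {j}. schur_complement A i j (\<tau> w) w \<noteq> 0"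
    by blast
  have sub: "neighbours E C j \<subseteq> C - {j}"
    using irrefl by (auto simp: neighbours_def)
  have "\<tau> ` neighbours E C j \<subseteq> neighbours E R i"
  proof (rule image_subsetI)
    fix w assume w: "w \<in> neighbours E C j"
    show "\<tau> w \<in> neighbours E R i"
    proof (rule ccontr)
      assume "\<tau> w \<notin> neighbours E R i"
      moreover have "\<tau> w \<in> R" "i \<noteq> \<tau> w"
        using \<tau> w sub by (auto simp: bij_betw_def)
      ultimately have "\<not> E i (\<tau> w)"
        by (simp add: neighbours_def)
      moreover have "w \<in> C" "E j w"
        using w by (simp_all add: neighbours_def)
      ultimately have "A i j * A (\<tau> w) w = A i w * A (\<tau> w) j"
        using edge_minors_vanishD[OF vanish j] i \<open>\<tau> w \<in> R\<close> \<open>i \<noteq> \<tau> w\<close> by blast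
      then have "A (\<tau> w) j * A i w = A i j * A (\<tau> w) w"
        by (simp add: mult.commute)
      then have "schur_complement A i j (\<tau> w) w = 0"
        using pivot by (simp add: schur_complement_def)
      then show False
        using nz w sub by auto
    qed
  qed
  moreover have "inj_on \<tau> (neighbours E C j)"
    using \<tau> sub unfolding bij_betw_def by (meson inj_on_subset)
  ultimately show ?thesis
    using card_inj_on_le finite_neighbours[OF assms(2)] by blast
qed

lemma edge_count_remove:
  assumes "finite S" "j \<in> S" and irrefl: "\<And>x. \<not> E x x" and sym: "\<And>u v. E u v \<Longrightarrow> E v u"
  shows "edge_count E S = edge_count E (S - {j}) + 2 * card (neighbours E S j)"
proof -
  let ?P = "\<lambda>S. {(u, v) \<in> S \<times> S. E u v}"
  let ?out = "Pair j ` neighbours E S j" and ?into = "(\<lambda>w. (w, j)) ` neighbours E S j"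
  have split: "?P S = ?P (S - {j}) \<union> (?out \<union> ?into)"
    using assms(2) sym by (auto simp: neighbours_def)
  have "?out \<inter> ?into = {}"
    using irrefl by (auto simp: neighbours_def)
  moreover have "?P (S - {j}) \<inter> (?out \<union> ?into) = {}"
    by auto
  moreover have "card ?out = card (neighbours E S j)" "card ?into = card (neighbours E S j)"
    by (auto intro: card_image inj_onI)
  moreover have "finite (?P (S - {j}))"
    using assms(1) by (auto intro: finite_subset[of _ "S \<times> S"])
  moreover have "finite ?out" "finite ?into"
    using finite_neighbours[OF assms(1)] by simp_all
  ultimately show ?thesis
    unfolding edge_count_def split by (simp add: card_Un_disjoint)
qed

lemma iso_betw_image_neighbours:
  assumes "iso_betw E \<sigma> F S" "w \<in> F"
  shows "\<sigma> ` neighbours E F w = neighbours E S (\<sigma> w)"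
  using assms unfolding iso_betw_def bij_betw_def neighbours_def by auto


lemma iso_betw_fun_upd_insert:
  assumes \<sigma>: "iso_betw E \<sigma> F (R - {i})" and "x \<notin> F" "i \<in> R"
    and irrefl: "\<And>x. \<not> E x x" and sym: "\<And>u v. E u v \<Longrightarrow> E v u"
    and adj_x: "\<And>w. w \<in> F \<Longrightarrow> E x w \<longleftrightarrow> E i (\<sigma> w)"
  shows "iso_betw E (\<sigma>(x := i)) (insert x F) R"
  unfolding iso_betw_def
proof (intro conjI ballI)
  show "bij_betw (\<sigma>(x := i)) (insert x F) R"
    using \<sigma> assms(2,3) unfolding iso_betw_def by (blast intro: bij_betw_fun_upd_insert)
  fix u v assume "u \<in> insert x F" "v \<in> insert x F"
  then consider "u = x" "v = x" | "u = x" "v \<in> F" | "u \<in> F" "v = x" | "u \<in> F" "v \<in> F"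
    by auto
  then show "E u v \<longleftrightarrow> E ((\<sigma>(x := i)) u) ((\<sigma>(x := i)) v)"
  proof cases
    case 1
    then show ?thesis
      using irrefl by simp
  next
    case 2
    then show ?thesis
      using adj_x assms(2) by auto
  next
    case 3
    then have "(\<sigma>(x := i)) u = \<sigma> u" "(\<sigma>(x := i)) v = i"
      using assms(2) by auto
    then show ?thesis
      using 3 adj_x[of u] sym by metis
  next
    case 4
    then show ?thesis
      using \<sigma> assms(2) unfolding iso_betw_def by auto
  qed
qed

lemma iso_betw_adjacent_of_degree_le:
  assumes "finite R" "x \<notin> F" and sym: "\<And>u v. E u v \<Longrightarrow> E v u"
    and \<sigma>: "iso_betw E \<sigma> F (R - {i})" and w: "w \<in> F" "E x w"
    and deg_le: "card (neighbours E (insert x F) w) \<le> card (neighbours E R (\<sigma> w))"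
  shows "E i (\<sigma> w)"
proof (rule ccontr)
  assume "\<not> E i (\<sigma> w)"
  then have "neighbours E R (\<sigma> w) = \<sigma> ` neighbours E F w"
    using iso_betw_image_neighbours[OF \<sigma> w(1)] sym by (auto simp: neighbours_def)
  moreover have bij: "bij_betw \<sigma> F (R - {i})"
    using \<sigma> unfolding iso_betw_def by blast
  then have "inj_on \<sigma> (neighbours E F w)"
    by (rule inj_on_subset[OF bij_betw_imp_inj_on]) (auto simp: neighbours_def)
  moreover have "finite (neighbours E F w)"
    using bij assms(1) by (simp add: bij_betw_finite finite_neighbours)
  moreover have "neighbours E (insert x F) w = insert x (neighbours E F w)"
    using w(2) sym by (auto simp: neighbours_def)
  ultimately show False
    using deg_le assms(2) by (simp add: card_image neighbours_def)
qed

text \<open>By \<open>deg_le\<close>, \<open>\<sigma>\<close> maps the neighbours of \<open>x\<close> to neighbours of \<open>i\<close>; by \<open>deg_eq\<close> onto them.\<close>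
lemma iso_betw_extend:
  assumes "finite R" "x \<notin> F" "i \<in> R"
    and irrefl: "\<And>x. \<not> E x x" and sym: "\<And>u v. E u v \<Longrightarrow> E v u"
    and \<sigma>: "iso_betw E \<sigma> F (R - {i})"
    and deg_le: "\<And>w. w \<in> F \<Longrightarrow> card (neighbours E (insert x F) w) \<le> card (neighbours E R (\<sigma> w))"
    and deg_eq: "card (neighbours E (insert x F) x) = card (neighbours E R i)"
  shows "iso_betw E (\<sigma>(x := i)) (insert x F) R"
proof -
  have bij: "bij_betw \<sigma> F (R - {i})"
    using \<sigma> unfolding iso_betw_def by blast
  have nbx: "neighbours E (insert x F) x \<subseteq> F"
    using irrefl by (auto simp: neighbours_def)
  have adj_forth: "E i (\<sigma> w)" if "w \<in> F" "E x w" for w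
    using iso_betw_adjacent_of_degree_le[OF assms(1,2) sym \<sigma> that deg_le[OF that(1)]] .
  have "\<sigma> ` neighbours E (insert x F) x = neighbours E R i"
  proof (rule card_subset_eq)
    show "finite (neighbours E R i)"
      using assms(1) by (rule finite_neighbours)
    show "\<sigma> ` neighbours E (insert x F) x \<subseteq> neighbours E R i"
      using nbx bij adj_forth by (fastforce simp: neighbours_def bij_betw_def)
    show "card (\<sigma> ` neighbours E (insert x F) x) = card (neighbours E R i)"
      using card_image[OF inj_on_subset[OF bij_betw_imp_inj_on[OF bij] nbx]] deg_eq by simp
  qed
  moreover have "\<sigma> w \<in> neighbours E R i" if "w \<in> F" "E i (\<sigma> w)" for w
    using bij that by (auto simp: neighbours_def bij_betw_def)
  ultimately have adj_back: "E x w" if "w \<in> F" "E i (\<sigma> w)" for w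
    using that nbx bij_betw_imp_inj_on[OF bij] by (fastforce simp: neighbours_def inj_on_def)
  show ?thesis
    using \<sigma> assms(2,3) irrefl sym adj_forth adj_back by (intro iso_betw_fun_upd_insert) blast+
qed

lemma edge_minors_vanish_edge_count_le:
  fixes A :: "'v \<Rightarrow> 'v \<Rightarrow> 'a::field"
  assumes "finite C" "finite R" "inverse_matrices R C A B" "edge_minors_vanish E C R A"
    and irrefl: "\<And>x. \<not> E x x" and sym: "\<And>u v. E u v \<Longrightarrow> E v u"
  shows "edge_count E C \<le> edge_count E R \<and>
    (edge_count E C = edge_count E R \<longrightarrow> (\<exists>\<pi>. iso_betw E \<pi> C R \<and> (\<forall>j\<in>C. A (\<pi> j) j \<noteq> 0)))"
  using assms(1-4)
proof (induction C arbitrary: R B rule: finite_induct)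
  case empty
  then have "R = {}"
    using inverse_matrices_empty by blast
  then show ?case
    by (simp add: iso_betw_def bij_betw_def)
next
  case (insert x F)
  let ?C = "insert x F"
  obtain i where i: "i \<in> R" "A i x \<noteq> 0"
    and "inverse_matrices (R - {i}) F A (schur_complement B x i)"
    using inverse_matrices_remove_column[OF insert.prems(2,1) insert.hyps(1,2)] by blast
  moreover have "edge_minors_vanish E F (R - {i}) A"
    using insert.prems(3) by (rule edge_minors_vanish_mono) auto
  ultimately have IH: "edge_count E F \<le> edge_count E (R - {i}) \<and>
    (edge_count E F = edge_count E (R - {i}) \<longrightarrow>
      (\<exists>\<sigma>. iso_betw E \<sigma> F (R - {i}) \<and> (\<forall>j\<in>F. A (\<sigma> j) j \<noteq> 0)))"
    using insert.IH insert.prems(1) by blast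
  have deg: "card (neighbours E ?C w) \<le> card (neighbours E R r)"
    if "w \<in> ?C" "r \<in> R" "A r w \<noteq> 0" for w r
    using edge_minors_vanish_degree_le[where E = E] insert irrefl that by blast
  have "edge_count E ?C = edge_count E F + 2 * card (neighbours E ?C x)"
    using edge_count_remove[where E = E, of ?C x] insert.hyps irrefl sym by simp
  moreover have "edge_count E R = edge_count E (R - {i}) + 2 * card (neighbours E R i)"
    using edge_count_remove[where E = E, OF insert.prems(1) i(1) irrefl sym] .
  ultimately have count: "edge_count E ?C \<le> edge_count E R"
    "edge_count E ?C = edge_count E R \<Longrightarrow>
      edge_count E F = edge_count E (R - {i}) \<and> card (neighbours E ?C x) = card (neighbours E R i)"
    using deg[OF insertI1 i] IH by linarith+
  show ?case
  proof (intro conjI impI)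
    assume "edge_count E ?C = edge_count E R"
    then obtain \<sigma> where \<sigma>: "iso_betw E \<sigma> F (R - {i})" and nz: "\<forall>j\<in>F. A (\<sigma> j) j \<noteq> 0"
      and deg_eq: "card (neighbours E ?C x) = card (neighbours E R i)"
      using count(2) IH by blast
    have "\<sigma> w \<in> R" if "w \<in> F" for w
      using \<sigma> that unfolding iso_betw_def bij_betw_def by auto
    then have "iso_betw E (\<sigma>(x := i)) ?C R"
      using iso_betw_extend[OF insert.prems(1) insert.hyps(2) i(1) irrefl sym \<sigma> _ deg_eq] deg nz
      by blast
    moreover have "\<forall>j\<in>?C. A ((\<sigma>(x := i)) j) j \<noteq> 0"
      using nz i(2) insert.hyps(2) by auto
    ultimately show "\<exists>\<pi>. iso_betw E \<pi> ?C R \<and> (\<forall>j\<in>?C. A (\<pi> j) j \<noteq> 0)"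
      by blast
  qed (fact count(1))
qed

lemma edge_minors_vanish_induced_iso:
  fixes A :: "nat \<Rightarrow> nat \<Rightarrow> 'a::field"
  assumes "finite C" "finite R" "inverse_matrices R C A B"
    and "edge_minors_vanish E C R A" "edge_minors_vanish E R C B"
    and "\<And>x. \<not> E x x" "\<And>u v. E u v \<Longrightarrow> E v u"
  shows "induced_iso E C R"
proof -
  have "inverse_matrices C R B A"
    using assms(3) by (rule inverse_matrices_commute[THEN iffD1])
  then have "edge_count E R \<le> edge_count E C"
    using edge_minors_vanish_edge_count_le[OF assms(2,1) _ assms(5-7)] by blast
  then show ?thesis
    using edge_minors_vanish_edge_count_le[OF assms(1-4,6,7)]
    unfolding induced_iso_def iso_betw_def by auto
qed

section \<open>Components of \<open>\<Gamma>(V\<^sub>1)\<close>\<close>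

lemma simple_graphD:
  assumes "simple_graph n E"
  shows "E u v \<Longrightarrow> u < n \<and> v < n" "E u v \<Longrightarrow> E v u" "\<not> E u u"
  using assms unfolding simple_graph_def by blast+

lemma V1_iff:
  assumes "simple_graph n E"
  shows "v \<in> V1 n E \<longleftrightarrow> (\<exists>w. E v w)"
  using simple_graphD[OF assms] unfolding V1_def by blast

lemma comp_of_subset_V1: "comp_of n E v \<subseteq> V1 n E"
  unfolding comp_of_def by blast

lemma self_in_comp_of: "v \<in> V1 n E \<Longrightarrow> v \<in> comp_of n E v"
  unfolding comp_of_def by simp

lemma comp_of_eq:
  assumes "simple_graph n E" "u \<in> comp_of n E v"
  shows "comp_of n E u = comp_of n E v"
proof -
  let ?R = "\<lambda>a b. a \<in> V1 n E \<and> b \<in> V1 n E \<and> E a b"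
  have "symp ?R"
    using simple_graphD(2)[OF assms(1)] by (auto intro: sympI)
  have vu: "?R\<^sup>*\<^sup>* v u"
    using assms(2) unfolding comp_of_def by simp
  then have "?R\<^sup>*\<^sup>* u v"
    by (rule sympD[OF symp_rtranclp[OF \<open>symp ?R\<close>]])
  with vu show ?thesis
    unfolding comp_of_def by (auto intro: rtranclp_trans)
qed

lemma comp_of_adjacent:
  assumes "simple_graph n E" "E a b"
  shows "comp_of n E a = comp_of n E b"
proof -
  have "a \<in> V1 n E" "b \<in> V1 n E"
    using assms V1_iff simple_graphD(2) by blast+
  then have "b \<in> comp_of n E a"
    using assms(2) unfolding comp_of_def by auto
  then show ?thesis
    using comp_of_eq[OF assms(1)] by metis
qed

lemma comp_of_in_components: "v \<in> V1 n E \<Longrightarrow> comp_of n E v \<in> components n E"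
  unfolding components_def by simp

lemma components_eq_comp_of:
  assumes "simple_graph n E" "C \<in> components n E" "v \<in> C"
  shows "C = comp_of n E v"
  using assms comp_of_eq unfolding components_def by fastforce

lemma components_disjoint:
  assumes "simple_graph n E" "C \<in> components n E" "D \<in> components n E" "v \<in> C" "v \<in> D"
  shows "C = D"
  using components_eq_comp_of assms by metis

lemma components_nonempty: "C \<in> components n E \<Longrightarrow> \<exists>v. v \<in> C"
  unfolding components_def using self_in_comp_of by blast

lemma components_subset_V1: "C \<in> components n E \<Longrightarrow> C \<subseteq> V1 n E"
  unfolding components_def using comp_of_subset_V1 by blast

lemma components_subset_lessThan: "C \<in> components n E \<Longrightarrow> C \<subseteq> {..<n}"
  using components_subset_V1 unfolding V1_def by blast

section \<open>The abelianisation of \<open>G_Gamma\<close>\<close>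

type_synonym G_elt = "(nat \<Rightarrow> int) \<times> (nat \<times> nat \<Rightarrow> int)"

lemma carrier_G_Gamma:
  "a \<in> carrier (G_Gamma n E) \<longleftrightarrow> (\<forall>j\<ge>n. fst a j = 0) \<and> (\<forall>p. p \<notin> nonedges n E \<longrightarrow> snd a p = 0)"
  by (simp add: G_Gamma_def)

lemma mult_G_Gamma [simp]: "a \<otimes>\<^bsub>G_Gamma n E\<^esub> b = G_mult n E a b"
  by (simp add: G_Gamma_def)

lemma one_G_Gamma [simp]: "\<one>\<^bsub>G_Gamma n E\<^esub> = (\<lambda>_. 0, \<lambda>_. 0)"
  by (simp add: G_Gamma_def)

lemma fst_G_mult [simp]: "fst (G_mult n E a b) = (\<lambda>j. fst a j + fst b j)"
  by (simp add: G_mult_def)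

lemma group_G_Gamma: "group (G_Gamma n E)"
proof (rule groupI)
  let ?G = "G_Gamma n E"
  show "x \<otimes>\<^bsub>?G\<^esub> y \<in> carrier ?G" if "x \<in> carrier ?G" "y \<in> carrier ?G" for x y
    using that by (simp add: carrier_G_Gamma G_mult_def)
  show "\<one>\<^bsub>?G\<^esub> \<in> carrier ?G"
    by (simp add: carrier_G_Gamma)
  show "x \<otimes>\<^bsub>?G\<^esub> y \<otimes>\<^bsub>?G\<^esub> z = x \<otimes>\<^bsub>?G\<^esub> (y \<otimes>\<^bsub>?G\<^esub> z)" for x y z
    by (simp add: G_mult_def fun_eq_iff algebra_simps)
  show "\<one>\<^bsub>?G\<^esub> \<otimes>\<^bsub>?G\<^esub> x = x" for x
    by (simp add: G_mult_def prod_eq_iff fun_eq_iff)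
  show "\<exists>y\<in>carrier ?G. y \<otimes>\<^bsub>?G\<^esub> x = \<one>\<^bsub>?G\<^esub>" if "x \<in> carrier ?G" for x
  proof
    let ?y = "(\<lambda>j. - fst x j,
      \<lambda>p. if p \<in> nonedges n E then fst x (snd p) * fst x (fst p) - snd x p else 0)"
    show "?y \<in> carrier ?G"
      using that by (simp add: carrier_G_Gamma)
    show "?y \<otimes>\<^bsub>?G\<^esub> x = \<one>\<^bsub>?G\<^esub>"
      using that by (auto simp: G_mult_def carrier_G_Gamma fun_eq_iff)
  qed
qed

definition int_vectors :: "nat \<Rightarrow> (nat \<Rightarrow> int) set" where
  "int_vectors n = {z. \<forall>j\<ge>n. z j = 0}"

definition unit_vec :: "nat \<Rightarrow> nat \<Rightarrow> int" where
  "unit_vec u = (\<lambda>j. if j = u then 1 else 0)"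

text \<open>The endomorphism of \<open>G_Gamma n E / \<gamma>\<^sub>2(G_Gamma n E) \<cong> \<int>\<^sup>n\<close> induced by \<open>f\<close>
  (see \<open>fst_hom_eq_ab_map\<close>), and its matrix.\<close>
definition ab_map :: "(G_elt \<Rightarrow> G_elt) \<Rightarrow> (nat \<Rightarrow> int) \<Rightarrow> nat \<Rightarrow> int" where
  "ab_map f z = fst (f (z, \<lambda>_. 0))"

definition ab_matrix :: "(G_elt \<Rightarrow> G_elt) \<Rightarrow> nat \<Rightarrow> nat \<Rightarrow> int" where
  "ab_matrix f i u = ab_map f (unit_vec u) i"

lemma unit_vec_in_int_vectors: "u < n \<Longrightarrow> unit_vec u \<in> int_vectors n"
  by (simp add: unit_vec_def int_vectors_def)

lemma Pair_zero_in_carrier_G_Gamma: "(z, \<lambda>_. 0) \<in> carrier (G_Gamma n E) \<longleftrightarrow> z \<in> int_vectors n"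
  by (simp add: carrier_G_Gamma int_vectors_def)

lemma fst_hom_mult:
  assumes "f \<in> hom (G_Gamma n E) (G_Gamma n E)"
    and "a \<in> carrier (G_Gamma n E)" "b \<in> carrier (G_Gamma n E)"
  shows "fst (f (G_mult n E a b)) = (\<lambda>j. fst (f a) j + fst (f b) j)"
  using hom_mult[OF assms] by simp

lemma fst_hom_one:
  assumes "f \<in> hom (G_Gamma n E) (G_Gamma n E)"
  shows "fst (f (\<lambda>_. 0, \<lambda>_. 0)) = (\<lambda>_. 0)"
  using hom_one[OF assms group_G_Gamma group_G_Gamma] by simp

text \<open>\<open>y\<^sub>a\<^sub>b\<^sup>m\<close> is the commutator of \<open>x\<^sub>b\<close> and \<open>x\<^sub>a\<^sup>m\<close>, and \<open>fst \<circ> f\<close> is a homomorphism into an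
  abelian group.\<close>
lemma fst_hom_commutator:
  assumes f: "f \<in> hom (G_Gamma n E) (G_Gamma n E)" and p: "p \<in> nonedges n E"
  shows "fst (f (\<lambda>_. 0, \<lambda>q. if q = p then m else 0)) = (\<lambda>_. 0)"
proof -
  obtain a b where ab: "p = (a, b)" "a < b" "b < n"
    using p by (auto simp: nonedges_def)
  define x where "x = (unit_vec b, \<lambda>_::nat \<times> nat. 0::int)"
  define y where "y = (\<lambda>j. m * unit_vec a j, \<lambda>_::nat \<times> nat. 0::int)"
  define s where "s = (\<lambda>j. unit_vec b j + m * unit_vec a j, \<lambda>_::nat \<times> nat. 0::int)"
  define c where "c = (\<lambda>_::nat. 0::int, \<lambda>q. if q = p then m else 0)"
  have carrier: "x \<in> carrier (G_Gamma n E)" "y \<in> carrier (G_Gamma n E)"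
      "s \<in> carrier (G_Gamma n E)" "c \<in> carrier (G_Gamma n E)"
    using ab p by (auto simp: carrier_G_Gamma x_def y_def s_def c_def unit_vec_def)
  have "G_mult n E x y = G_mult n E s c"
    using ab p by (auto simp: G_mult_def x_def y_def s_def c_def unit_vec_def fun_eq_iff)
  then have "(\<lambda>j. fst (f s) j + fst (f c) j) = fst (f (G_mult n E x y))"
    using fst_hom_mult[OF f] carrier by simp
  also have "\<dots> = fst (f (G_mult n E y x))"
    using fst_hom_mult[OF f] carrier by (simp add: add.commute)
  also have "G_mult n E y x = s"
    using ab by (auto simp: G_mult_def x_def y_def s_def unit_vec_def fun_eq_iff nonedges_def)
  finally show ?thesis
    unfolding c_def by (simp add: fun_eq_iff)
qed

lemma fst_hom_central:
  assumes f: "f \<in> hom (G_Gamma n E) (G_Gamma n E)" and t: "(\<lambda>_. 0, t) \<in> carrier (G_Gamma n E)"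
  shows "fst (f (\<lambda>_. 0, t)) = (\<lambda>_. 0)"
proof -
  let ?t = "\<lambda>S q. if q \<in> S then t q else 0"
  have "finite (nonedges n E)"
    by (rule finite_subset[of _ "{..<n} \<times> {..<n}"]) (auto simp: nonedges_def)
  moreover have "fst (f (\<lambda>_. 0, ?t S)) = (\<lambda>_. 0)" if "finite S" "S \<subseteq> nonedges n E" for S
    using that
  proof (induction S rule: finite_induct)
    case empty
    then show ?case
      using fst_hom_one[OF f] by simp
  next
    case (insert p S)
    have "(\<lambda>_. 0, ?t (insert p S)) = G_mult n E (\<lambda>_. 0, ?t S) (\<lambda>_. 0, \<lambda>q. if q = p then t p else 0)"
      using insert.hyps(2) by (auto simp: G_mult_def fun_eq_iff)
    moreover have "(\<lambda>_. 0, ?t S) \<in> carrier (G_Gamma n E)"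
        "(\<lambda>_. 0, \<lambda>q. if q = p then t p else 0) \<in> carrier (G_Gamma n E)"
      using insert.prems by (auto simp: carrier_G_Gamma)
    ultimately show ?case
      using fst_hom_mult[OF f] insert fst_hom_commutator[OF f, of p "t p"] by simp
  qed
  ultimately have "fst (f (\<lambda>_. 0, ?t (nonedges n E))) = (\<lambda>_. 0)"
    by blast
  moreover have "?t (nonedges n E) = t"
    using t by (auto simp: carrier_G_Gamma fun_eq_iff)
  ultimately show ?thesis
    by simp
qed

lemma fst_hom_eq_ab_map:
  assumes f: "f \<in> hom (G_Gamma n E) (G_Gamma n E)" and "(z, t) \<in> carrier (G_Gamma n E)"
  shows "fst (f (z, t)) = ab_map f z"
proof -
  have "(z, t) = G_mult n E (z, \<lambda>_. 0) (\<lambda>_. 0, t)"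
    by (simp add: G_mult_def fun_eq_iff)
  moreover have "(z, \<lambda>_. 0) \<in> carrier (G_Gamma n E)" "(\<lambda>_. 0, t) \<in> carrier (G_Gamma n E)"
    using assms(2) by (auto simp: carrier_G_Gamma)
  ultimately show ?thesis
    using fst_hom_mult[OF f] fst_hom_central[OF f] by (simp add: ab_map_def)
qed

lemma ab_map_in_int_vectors:
  assumes "f \<in> hom (G_Gamma n E) (G_Gamma n E)" "z \<in> int_vectors n"
  shows "ab_map f z \<in> int_vectors n"
  using hom_in_carrier[OF assms(1)] assms(2)
  by (simp add: ab_map_def Pair_zero_in_carrier_G_Gamma carrier_G_Gamma int_vectors_def)

lemma ab_map_add:
  assumes f: "f \<in> hom (G_Gamma n E) (G_Gamma n E)" and "z \<in> int_vectors n" "w \<in> int_vectors n"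
  shows "ab_map f (\<lambda>j. z j + w j) = (\<lambda>i. ab_map f z i + ab_map f w i)"
proof -
  have carrier: "(z, \<lambda>_. 0) \<in> carrier (G_Gamma n E)" "(w, \<lambda>_. 0) \<in> carrier (G_Gamma n E)"
    using assms(2,3) by (simp_all add: Pair_zero_in_carrier_G_Gamma)
  define t where "t = snd (G_mult n E (z, \<lambda>_. 0) (w, \<lambda>_. 0))"
  have prod: "G_mult n E (z, \<lambda>_. 0) (w, \<lambda>_. 0) = (\<lambda>j. z j + w j, t)"
    unfolding t_def by (simp add: prod_eq_iff)
  have "G_mult n E (z, \<lambda>_. 0) (w, \<lambda>_. 0) \<in> carrier (G_Gamma n E)"
    using carrier by (simp add: carrier_G_Gamma G_mult_def)
  then have "fst (f (G_mult n E (z, \<lambda>_. 0) (w, \<lambda>_. 0))) = ab_map f (\<lambda>j. z j + w j)"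
    unfolding prod by (rule fst_hom_eq_ab_map[OF f])
  then show ?thesis
    using fst_hom_mult[OF f carrier] by (simp add: ab_map_def)
qed

lemma ab_map_zero:
  assumes "f \<in> hom (G_Gamma n E) (G_Gamma n E)"
  shows "ab_map f (\<lambda>_. 0) = (\<lambda>_. 0)"
  using fst_hom_one[OF assms] by (simp add: ab_map_def)

lemma ab_map_smult:
  assumes f: "f \<in> hom (G_Gamma n E) (G_Gamma n E)" and z: "z \<in> int_vectors n"
  shows "ab_map f (\<lambda>j. m * z j) = (\<lambda>i. m * ab_map f z i)"
proof (induction m rule: int_induct[where k = 0])
  case base
  then show ?case
    using ab_map_zero[OF f] by simp
next
  case (step1 m)
  have "ab_map f (\<lambda>j. (m + 1) * z j) = ab_map f (\<lambda>j. m * z j + z j)"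
    by (simp add: algebra_simps)
  also have "\<dots> = (\<lambda>i. ab_map f (\<lambda>j. m * z j) i + ab_map f z i)"
    using z by (intro ab_map_add[OF f]) (auto simp: int_vectors_def)
  finally show ?case
    using step1.IH by (simp add: algebra_simps)
next
  case (step2 m)
  have "ab_map f (\<lambda>j. m * z j) = ab_map f (\<lambda>j. (m - 1) * z j + z j)"
    by (simp add: algebra_simps)
  also have "\<dots> = (\<lambda>i. ab_map f (\<lambda>j. (m - 1) * z j) i + ab_map f z i)"
    using z by (intro ab_map_add[OF f]) (auto simp: int_vectors_def)
  finally show ?case
    using step2.IH by (auto simp: algebra_simps fun_eq_iff)
qed

lemma ab_map_eq_sum:
  assumes f: "f \<in> hom (G_Gamma n E) (G_Gamma n E)" and z: "z \<in> int_vectors n"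
  shows "ab_map f z i = (\<Sum>k<n. z k * ab_matrix f i k)"
proof -
  have "ab_map f (\<lambda>j. if j < m then z j else 0) i = (\<Sum>k<m. z k * ab_matrix f i k)" if "m \<le> n" for m
    using that
  proof (induction m)
    case 0
    then show ?case
      using ab_map_zero[OF f] by simp
  next
    case (Suc m)
    have "(\<lambda>j. if j < Suc m then z j else 0)
        = (\<lambda>j. (if j < m then z j else 0) + z m * unit_vec m j)"
      by (auto simp: unit_vec_def fun_eq_iff less_Suc_eq)
    moreover have "(\<lambda>j. if j < m then z j else 0) \<in> int_vectors n"
        "(\<lambda>j. z m * unit_vec m j) \<in> int_vectors n"
      using Suc.prems by (auto simp: int_vectors_def unit_vec_def)
    ultimately show ?case
      using Suc ab_map_add[OF f] ab_map_smult[OF f unit_vec_in_int_vectors, of m]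
      by (simp add: ab_matrix_def)
  qed
  moreover have "(\<lambda>j. if j < n then z j else 0) = z"
    using z by (auto simp: int_vectors_def fun_eq_iff)
  ultimately show ?thesis
    by (metis order_refl)
qed

section \<open>Block structure of compatible inverse matrices\<close>

definition component_image ::
    "nat \<Rightarrow> (nat \<Rightarrow> nat \<Rightarrow> bool) \<Rightarrow> (nat \<Rightarrow> nat \<Rightarrow> 'a::zero) \<Rightarrow> nat set \<Rightarrow> nat set" where
  "component_image n E A C = (THE D. D \<in> components n E \<and> (\<forall>u\<in>C. \<forall>i<n. A i u \<noteq> 0 \<longrightarrow> i \<in> D))"

locale compatible_inverse_matrices =
  fixes n :: nat and E :: "nat \<Rightarrow> nat \<Rightarrow> bool" and A B :: "nat \<Rightarrow> nat \<Rightarrow> 'a::field"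
  assumes simple: "simple_graph n E"
    and inverse: "inverse_matrices {..<n} {..<n} A B"
    and minors_A: "edge_minors_vanish E {..<n} {..<n} A"
    and minors_B: "edge_minors_vanish E {..<n} {..<n} B"

context compatible_inverse_matrices
begin

lemma swap: "compatible_inverse_matrices n E B A"
proof
  show "inverse_matrices {..<n} {..<n} B A"
    using inverse by (rule inverse_matrices_commute[THEN iffD1])
qed (fact simple minors_B minors_A)+

lemma column_pivot:
  assumes "u < n"
  obtains k where "k < n" "A k u \<noteq> 0" "B u k \<noteq> 0"
  using inverse_matrices_pivot[OF inverse] assms by blast

lemma minor_vanishes:
  assumes "E u v" "a < n" "b < n" "a \<noteq> b" "\<not> E a b"
  shows "A a u * A b v = A a v * A b u"
  using edge_minors_vanishD[OF minors_A] simple_graphD(1)[OF simple] assms by blast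

lemma columns_not_proportional:
  assumes "u < n" "w < n" "u \<noteq> w" "\<alpha> \<noteq> 0"
  shows "\<exists>b<n. \<alpha> * A b w \<noteq> \<beta> * A b u"
proof (rule ccontr)
  assume "\<not> ?thesis"
  then have "(\<Sum>b<n. B w b * (\<alpha> * A b w - \<beta> * A b u)) = 0"
    by simp
  moreover have "(\<Sum>b<n. B w b * (\<alpha> * A b w - \<beta> * A b u))
      = \<alpha> * (\<Sum>b<n. B w b * A b w) - \<beta> * (\<Sum>b<n. B w b * A b u)"
    by (simp add: algebra_simps sum_subtractf sum_distrib_left)
  ultimately show False
    using inverse assms unfolding inverse_matrices_def by simp
qed

lemma adjacent_row_with_nonzero_minor:
  assumes "E u w" "i < n" "A i u \<noteq> 0"
  obtains b where "b < n" "E i b" "A i u * A b w \<noteq> A i w * A b u"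
proof -
  have "u < n" "w < n" "u \<noteq> w"
    using assms(1) simple_graphD[OF simple] by auto
  then obtain b where b: "b < n" "A i u * A b w \<noteq> A i w * A b u"
    using columns_not_proportional assms(3) by blast
  moreover have "b \<noteq> i"
    using b(2) by (auto simp: mult.commute)
  ultimately have "E i b"
    using minor_vanishes[OF assms(1,2)] by blast
  with b show thesis
    using that by blast
qed

lemma support_in_V1:
  assumes "u \<in> V1 n E" "i < n" "A i u \<noteq> 0"
  shows "i \<in> V1 n E"
  using assms adjacent_row_with_nonzero_minor V1_iff[OF simple] by metis

lemma column_support_connected:
  assumes u: "u \<in> V1 n E" and i: "i < n" "A i u \<noteq> 0" and i': "i' < n" "A i' u \<noteq> 0"
  shows "comp_of n E i = comp_of n E i'"
proof (rule ccontr)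
  assume ne: "comp_of n E i \<noteq> comp_of n E i'"
  obtain w where w: "E u w"
    using u V1_iff[OF simple] by blast
  obtain b where b: "b < n" "E i b" and minor: "A i u * A b w \<noteq> A i w * A b u"
    using adjacent_row_with_nonzero_minor[OF w i] by blast
  have "i' \<noteq> i" "\<not> E i' i" "i' \<noteq> b" "\<not> E i' b"
    using ne b(2) comp_of_adjacent[OF simple] by metis+
  then have "A i' u * A i w = A i' w * A i u" "A i' u * A b w = A i' w * A b u"
    using minor_vanishes[OF w i'(1)] i(1) b(1) by blast+
  then have "A i' u * (A i u * A b w) = A i' u * (A i w * A b u)"
    by algebra
  then show False
    using minor i'(2) by simp
qed

lemma edge_support_connected:
  assumes "E u w" "i < n" "A i u \<noteq> 0" "b < n" "A b w \<noteq> 0"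
  shows "comp_of n E b = comp_of n E i"
proof (cases "b = i \<or> E i b")
  case True
  then show ?thesis
    using comp_of_adjacent[OF simple] by metis
next
  case False
  then have "A i u * A b w = A i w * A b u"
    using minor_vanishes assms by metis
  then have "A b u \<noteq> 0"
    using assms(3,5) by auto
  moreover have "u \<in> V1 n E"
    using assms(1) V1_iff[OF simple] by blast
  ultimately show ?thesis
    using column_support_connected assms(2,3,4) by metis
qed

lemma component_support_connected:
  assumes v: "v \<in> V1 n E" "i0 < n" "A i0 v \<noteq> 0"
    and u: "u \<in> comp_of n E v" and i: "i < n" "A i u \<noteq> 0"
  shows "comp_of n E i = comp_of n E i0"
proof -
  have "(\<lambda>a b. a \<in> V1 n E \<and> b \<in> V1 n E \<and> E a b)\<^sup>*\<^sup>* v u"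
    using u unfolding comp_of_def by simp
  then show ?thesis
    using i
  proof (induction arbitrary: i rule: rtranclp_induct)
    case base
    then show ?case
      using column_support_connected v by blast
  next
    case (step y z)
    then have "E y z" "y < n"
      using simple_graphD(1)[OF simple] by auto
    then obtain r where "r < n" "A r y \<noteq> 0"
      using column_pivot by metis
    then show ?case
      using step edge_support_connected[OF \<open>E y z\<close>] by metis
  qed
qed

lemma component_image:
  assumes C: "C \<in> components n E"
  shows "component_image n E A C \<in> components n E"
    and "\<And>u i. u \<in> C \<Longrightarrow> i < n \<Longrightarrow> A i u \<noteq> 0 \<Longrightarrow> i \<in> component_image n E A C"
proof -
  let ?P = "\<lambda>D. D \<in> components n E \<and> (\<forall>u\<in>C. \<forall>i<n. A i u \<noteq> 0 \<longrightarrow> i \<in> D)"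
  obtain v where v: "v \<in> V1 n E" "C = comp_of n E v"
    using C unfolding components_def by blast
  obtain i0 where i0: "i0 < n" "A i0 v \<noteq> 0"
    using column_pivot v(1) unfolding V1_def by blast
  have "?P (comp_of n E i0)"
  proof (intro conjI ballI allI impI)
    show "comp_of n E i0 \<in> components n E"
      using support_in_V1[OF v(1) i0] by (rule comp_of_in_components)
    fix u i assume "u \<in> C" "i < n" "A i u \<noteq> 0"
    moreover have "u \<in> V1 n E"
      using \<open>u \<in> C\<close> C components_subset_V1 by blast
    ultimately show "i \<in> comp_of n E i0"
      using component_support_connected[OF v(1) i0] v(2) support_in_V1 self_in_comp_of by metis
  qed
  moreover have "D = D'" if "?P D" "?P D'" for D D'
  proof -
    obtain u where "u \<in> C" "u < n"
      using components_nonempty[OF C] components_subset_lessThan[OF C] by blast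
    moreover obtain i where "i < n" "A i u \<noteq> 0"
      using column_pivot \<open>u < n\<close> by metis
    ultimately show "D = D'"
      using that components_disjoint[OF simple] by metis
  qed
  ultimately have "\<exists>!D. ?P D"
    by blast
  then have "?P (component_image n E A C)"
    unfolding component_image_def by (rule theI')
  then show "component_image n E A C \<in> components n E"
    and "\<And>u i. u \<in> C \<Longrightarrow> i < n \<Longrightarrow> A i u \<noteq> 0 \<Longrightarrow> i \<in> component_image n E A C"
    by blast+
qed

lemma component_image_inverse:
  assumes C: "C \<in> components n E"
  shows "component_image n E B (component_image n E A C) = C"
proof -
  interpret swap: compatible_inverse_matrices n E B A
    by (rule swap)
  let ?D = "component_image n E A C"
  obtain v where "v \<in> C" "v < n"
    using components_nonempty[OF C] components_subset_lessThan[OF C] by blast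
  moreover obtain k where "k < n" "A k v \<noteq> 0" "B v k \<noteq> 0"
    using column_pivot \<open>v < n\<close> by metis
  ultimately have "v \<in> component_image n E B ?D"
    using component_image(2)[OF C] swap.component_image(2)[OF component_image(1)[OF C]] by blast
  then show ?thesis
    using components_disjoint[OF simple] swap.component_image(1) component_image(1) C \<open>v \<in> C\<close>
    by blast
qed

lemma bij_betw_component_image: "bij_betw (component_image n E A) (components n E) (components n E)"
proof -
  interpret swap: compatible_inverse_matrices n E B A
    by (rule swap)
  show ?thesis
    by (rule bij_betw_byWitness[where f' = "component_image n E B"])
      (use component_image component_image_inverse swap.component_image swap.component_image_inverse
        in auto)
qed

lemma inverse_matrices_component_image:
  assumes C: "C \<in> components n E"
  shows "inverse_matrices (component_image n E A C) C A B"
proof -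
  interpret swap: compatible_inverse_matrices n E B A
    by (rule swap)
  let ?D = "component_image n E A C"
  have sub: "?D \<subseteq> {..<n}" "C \<subseteq> {..<n}"
    using component_image(1) C components_subset_lessThan by blast+
  have "(\<Sum>k\<in>C. A i k * B k l) = (\<Sum>k<n. A i k * B k l)" if "l \<in> ?D" for i l
  proof (rule sum.mono_neutral_left)
    show "\<forall>k\<in>{..<n} - C. A i k * B k l = 0"
      using swap.component_image(2)[OF component_image(1)[OF C]] component_image_inverse[OF C] that
      by force
  qed (use sub in auto)
  moreover have "(\<Sum>k\<in>?D. B j k * A k l) = (\<Sum>k<n. B j k * A k l)" if "l \<in> C" for j l
  proof (rule sum.mono_neutral_left)
    show "\<forall>k\<in>{..<n} - ?D. B j k * A k l = 0"
      using component_image(2)[OF C] that by force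
  qed (use sub in auto)
  ultimately show ?thesis
    using inverse sub unfolding inverse_matrices_def by (simp add: subset_iff)
qed

lemma induced_iso_component_image:
  assumes C: "C \<in> components n E"
  shows "induced_iso E C (component_image n E A C)"
proof -
  let ?D = "component_image n E A C"
  have sub: "?D \<subseteq> {..<n}" "C \<subseteq> {..<n}"
    using component_image(1) C components_subset_lessThan by blast+
  show ?thesis
  proof (rule edge_minors_vanish_induced_iso)
    show "finite C" "finite ?D"
      using sub finite_subset by blast+
    show "inverse_matrices ?D C A B"
      using C by (rule inverse_matrices_component_image)
    show "edge_minors_vanish E C ?D A" "edge_minors_vanish E ?D C B"
      using minors_A minors_B sub by (auto elim: edge_minors_vanish_mono)
  qed (use simple_graphD[OF simple] in auto)
qed

end

section \<open>Automorphisms of \<open>G_Gamma\<close>\<close>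

lemma inverse_matrices_of_int:
  "inverse_matrices R C A B \<Longrightarrow>
    inverse_matrices R C (\<lambda>i j. (of_int (A i j) :: 'a::comm_ring_1)) (\<lambda>j i. of_int (B j i))"
  unfolding inverse_matrices_def by (auto simp flip: of_int_mult of_int_sum)

lemma edge_minors_vanish_of_int:
  "edge_minors_vanish E C R A \<Longrightarrow>
    edge_minors_vanish E C R (\<lambda>i j. (of_int (A i j) :: 'a::comm_ring_1))"
  unfolding edge_minors_vanish_def by (metis of_int_mult)

lemma component_image_of_int:
  "component_image n E (\<lambda>i j. (of_int (A i j) :: 'a::ring_char_0)) = component_image n E A"
  by (simp add: component_image_def fun_eq_iff)

lemma ab_matrix_left_inverse:
  assumes f: "f \<in> hom (G_Gamma n E) (G_Gamma n E)" and g: "g \<in> hom (G_Gamma n E) (G_Gamma n E)"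
    and gf: "\<And>a. a \<in> carrier (G_Gamma n E) \<Longrightarrow> g (f a) = a" and u: "u < n"
  shows "(\<Sum>k<n. ab_matrix g j k * ab_matrix f k u) = (if j = u then 1 else 0)"
proof -
  let ?e = "(unit_vec u, \<lambda>_::nat \<times> nat. 0::int)"
  have e: "?e \<in> carrier (G_Gamma n E)"
    using u by (simp add: Pair_zero_in_carrier_G_Gamma unit_vec_in_int_vectors)
  have "f ?e = (ab_map f (unit_vec u), snd (f ?e))"
    by (simp add: ab_map_def)
  moreover have "f ?e \<in> carrier (G_Gamma n E)"
    using f e by (rule hom_in_carrier)
  ultimately have "fst (g (f ?e)) = ab_map g (ab_map f (unit_vec u))"
    by (metis fst_hom_eq_ab_map[OF g])
  then have "unit_vec u = ab_map g (ab_map f (unit_vec u))"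
    using gf[OF e] by simp
  moreover have "ab_map f (unit_vec u) \<in> int_vectors n"
    using ab_map_in_int_vectors[OF f unit_vec_in_int_vectors[OF u]] .
  ultimately have "unit_vec u j = (\<Sum>k<n. ab_matrix f k u * ab_matrix g j k)"
    using ab_map_eq_sum[OF g, of "ab_map f (unit_vec u)" j] by (simp add: ab_matrix_def)
  then show ?thesis
    by (simp add: unit_vec_def mult.commute)
qed

text \<open>The images of two adjacent generators commute, and the \<open>y\<^sub>a\<^sub>b\<close>-coordinate of the
  commutator of two elements is the \<open>2 \<times> 2\<close> minor of their \<open>x\<close>-parts in the rows \<open>a, b\<close>.\<close>
lemma edge_minors_vanish_ab_matrix:
  assumes f: "f \<in> hom (G_Gamma n E) (G_Gamma n E)" and simple: "simple_graph n E"
  shows "edge_minors_vanish E {..<n} {..<n} (ab_matrix f)"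
  unfolding edge_minors_vanish_def
proof (intro ballI impI allI)
  fix u v a b assume uv: "E u v" and ab: "a \<in> {..<n}" "b \<in> {..<n}" "a \<noteq> b" "\<not> E a b"
  let ?x = "\<lambda>w. (unit_vec w, \<lambda>_::nat \<times> nat. 0::int)"
  have carrier: "?x u \<in> carrier (G_Gamma n E)" "?x v \<in> carrier (G_Gamma n E)"
    using simple_graphD(1)[OF simple uv]
    by (simp_all add: Pair_zero_in_carrier_G_Gamma unit_vec_in_int_vectors)
  have "G_mult n E (?x u) (?x v) = G_mult n E (?x v) (?x u)"
    using uv simple_graphD(2)[OF simple uv]
    by (auto simp: G_mult_def unit_vec_def nonedges_def fun_eq_iff add.commute)
  then have "G_mult n E (f (?x u)) (f (?x v)) = G_mult n E (f (?x v)) (f (?x u))"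
    using hom_mult[OF f] carrier by (metis mult_G_Gamma)
  moreover define q where "q = (min a b, max a b)"
  ultimately have "snd (G_mult n E (f (?x u)) (f (?x v))) q
      = snd (G_mult n E (f (?x v)) (f (?x u))) q"
    by simp
  moreover have "q \<in> nonedges n E"
    using ab simple_graphD(2)[OF simple, of b a] by (auto simp: q_def nonedges_def min_def max_def)
  ultimately have "fst (f (?x u)) (snd q) * fst (f (?x v)) (fst q)
      = fst (f (?x v)) (snd q) * fst (f (?x u)) (fst q)"
    by (simp add: G_mult_def)
  then have "ab_matrix f (max a b) u * ab_matrix f (min a b) v
      = ab_matrix f (max a b) v * ab_matrix f (min a b) u"
    by (simp add: q_def ab_matrix_def ab_map_def)
  then show "ab_matrix f a u * ab_matrix f b v = ab_matrix f a v * ab_matrix f b u"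
    using ab(3) by (cases "a < b") (auto simp: min_def max_def mult.commute)
qed

lemma compatible_inverse_matrices_automorphism:
  assumes simple: "simple_graph n E" and \<phi>: "\<phi> \<in> iso (G_Gamma n E) (G_Gamma n E)"
  defines "\<psi> \<equiv> inv_into (carrier (G_Gamma n E)) \<phi>"
  shows "compatible_inverse_matrices n E
    (\<lambda>i u. rat_of_int (ab_matrix \<phi> i u)) (\<lambda>i u. rat_of_int (ab_matrix \<psi> i u))"
proof
  have hom: "\<phi> \<in> hom (G_Gamma n E) (G_Gamma n E)" "\<psi> \<in> hom (G_Gamma n E) (G_Gamma n E)"
    using \<phi> group.iso_set_sym[OF group_G_Gamma] unfolding \<psi>_def by (auto simp: iso_def)
  have bij: "bij_betw \<phi> (carrier (G_Gamma n E)) (carrier (G_Gamma n E))"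
    using \<phi> by (simp add: iso_def)
  have "\<psi> (\<phi> a) = a" "\<phi> (\<psi> a) = a" if "a \<in> carrier (G_Gamma n E)" for a
    using bij that unfolding \<psi>_def by (simp_all add: bij_betw_inv_into_left bij_betw_inv_into_right)
  then have "inverse_matrices {..<n} {..<n} (ab_matrix \<phi>) (ab_matrix \<psi>)"
    unfolding inverse_matrices_def using ab_matrix_left_inverse hom by simp
  then show "inverse_matrices {..<n} {..<n}
      (\<lambda>i u. rat_of_int (ab_matrix \<phi> i u)) (\<lambda>i u. rat_of_int (ab_matrix \<psi> i u))"
    by (rule inverse_matrices_of_int)
  show "edge_minors_vanish E {..<n} {..<n} (\<lambda>i u. rat_of_int (ab_matrix \<phi> i u))"
    "edge_minors_vanish E {..<n} {..<n} (\<lambda>i u. rat_of_int (ab_matrix \<psi> i u))"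
    using edge_minors_vanish_ab_matrix[OF _ simple] hom by (auto intro: edge_minors_vanish_of_int)
qed (fact simple)

lemma image_H_sub_subset:
  assumes f: "f \<in> hom (G_Gamma n E) (G_Gamma n E)"
    and support: "\<And>u i. u \<in> C \<Longrightarrow> i < n \<Longrightarrow> ab_matrix f i u \<noteq> 0 \<Longrightarrow> i \<in> D"
  shows "f ` H_sub n E C \<subseteq> H_sub n E D"
proof (rule image_subsetI)
  fix a assume a: "a \<in> H_sub n E C"
  then have carrier: "a \<in> carrier (G_Gamma n E)" "f a \<in> carrier (G_Gamma n E)"
    using hom_in_carrier[OF f] by (auto simp: H_sub_def)
  have "j \<in> D" if j: "fst (f a) j \<noteq> 0" for j
  proof -
    have "j < n"
      using carrier(2) j unfolding carrier_G_Gamma by (meson not_less)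
    moreover have "fst a \<in> int_vectors n"
      using carrier(1) by (simp add: carrier_G_Gamma int_vectors_def)
    then have "fst (f a) j = (\<Sum>k<n. fst a k * ab_matrix f j k)"
      using fst_hom_eq_ab_map[OF f, of "fst a" "snd a"] carrier(1) ab_map_eq_sum[OF f] by simp
    then obtain k where "fst a k \<noteq> 0" "ab_matrix f j k \<noteq> 0"
      using j sum.neutral[of "{..<n}" "\<lambda>k. fst a k * ab_matrix f j k"] by auto
    ultimately show "j \<in> D"
      using a support by (auto simp: H_sub_def)
  qed
  then show "f a \<in> H_sub n E D"
    using carrier(2) by (simp add: H_sub_def)
qed

lemma H_sub_inj_on_components:
  assumes "simple_graph n E" "C \<in> components n E" "D \<in> components n E"
    and "H_sub n E C = H_sub n E D"
  shows "C = D"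
proof -
  obtain v where v: "v \<in> C" "v < n"
    using components_nonempty[OF assms(2)] components_subset_lessThan[OF assms(2)] by blast
  then have "(unit_vec v, \<lambda>_. 0) \<in> H_sub n E C"
    by (auto simp: H_sub_def Pair_zero_in_carrier_G_Gamma int_vectors_def unit_vec_def)
  then have "(unit_vec v, \<lambda>_. 0) \<in> H_sub n E D"
    using assms(4) by simp
  then have "v \<in> D"
    unfolding H_sub_def unit_vec_def by force
  then show ?thesis
    using components_disjoint assms(1-3) v(1) by blast
qed

lemma automorphism_permutes_components:
  assumes simple: "simple_graph n E" and \<phi>: "\<phi> \<in> iso (G_Gamma n E) (G_Gamma n E)"
  defines "T \<equiv> component_image n E (ab_matrix \<phi>)"
  shows "bij_betw T (components n E) (components n E)"
    and "\<And>C. C \<in> components n E \<Longrightarrow> \<phi> ` H_sub n E C = H_sub n E (T C)"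
    and "\<And>C. C \<in> components n E \<Longrightarrow> induced_iso E C (T C)"
proof -
  define \<psi> where "\<psi> = inv_into (carrier (G_Gamma n E)) \<phi>"
  interpret compatible_inverse_matrices n E
      "\<lambda>i u. rat_of_int (ab_matrix \<phi> i u)" "\<lambda>i u. rat_of_int (ab_matrix \<psi> i u)"
    unfolding \<psi>_def using simple \<phi> by (rule compatible_inverse_matrices_automorphism)
  interpret swap: compatible_inverse_matrices n E
      "\<lambda>i u. rat_of_int (ab_matrix \<psi> i u)" "\<lambda>i u. rat_of_int (ab_matrix \<phi> i u)"
    by (rule swap)
  show "bij_betw T (components n E) (components n E)"
    using bij_betw_component_image by (simp add: T_def component_image_of_int)
  show "induced_iso E C (T C)" if "C \<in> components n E" for C
    using induced_iso_component_image[OF that] by (simp add: T_def component_image_of_int)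
  fix C assume C: "C \<in> components n E"
  have hom: "\<phi> \<in> hom (G_Gamma n E) (G_Gamma n E)" "\<psi> \<in> hom (G_Gamma n E) (G_Gamma n E)"
    using \<phi> group.iso_set_sym[OF group_G_Gamma] unfolding \<psi>_def by (auto simp: iso_def)
  have "\<phi> ` H_sub n E C \<subseteq> H_sub n E (T C)"
    using image_H_sub_subset[OF hom(1)] component_image(2)[OF C]
    by (simp add: T_def component_image_of_int)
  moreover have "H_sub n E (T C) \<subseteq> \<phi> ` H_sub n E C"
  proof
    fix b assume b: "b \<in> H_sub n E (T C)"
    have "\<psi> ` H_sub n E (T C) \<subseteq> H_sub n E C"
      using image_H_sub_subset[OF hom(2)] swap.component_image(2)[OF component_image(1)[OF C]]
        component_image_inverse[OF C]
      by (simp add: T_def component_image_of_int)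
    then have "\<psi> b \<in> H_sub n E C"
      using b by blast
    moreover have "b = \<phi> (\<psi> b)"
      using \<phi> b unfolding \<psi>_def iso_def H_sub_def
      by (auto intro: bij_betw_inv_into_right[symmetric])
    ultimately show "b \<in> \<phi> ` H_sub n E C"
      by (rule rev_image_eqI)
  qed
  ultimately show "\<phi> ` H_sub n E C = H_sub n E (T C)"
    by (rule subset_antisym)
qed

lemma ex1_permutes_conjugate:
  assumes g: "bij_betw g I S" and T: "bij_betw T S S"
  shows "\<exists>!\<sigma>. \<sigma> permutes I \<and> (\<forall>i\<in>I. g (\<sigma> i) = T (g i))"
proof -
  let ?\<sigma> = "\<lambda>i. if i \<in> I then inv_into I g (T (g i)) else i"
  have "bij_betw ?\<sigma> I I"
  proof (rule bij_betw_cong[THEN iffD1])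
    show "bij_betw (inv_into I g \<circ> T \<circ> g) I I"
      using g T bij_betw_inv_into by (blast intro: bij_betw_trans)
  qed simp
  then have perm: "?\<sigma> permutes I"
    by (rule bij_imp_permutes) simp
  have comm: "\<forall>i\<in>I. g (?\<sigma> i) = T (g i)"
  proof
    fix i assume "i \<in> I"
    then have "T (g i) \<in> g ` I"
      using g T by (auto simp: bij_betw_def)
    then show "g (?\<sigma> i) = T (g i)"
      using \<open>i \<in> I\<close> by (simp add: f_inv_into_f)
  qed
  have uniq: "\<tau> = ?\<sigma>" if \<tau>: "\<tau> permutes I" "\<forall>i\<in>I. g (\<tau> i) = T (g i)" for \<tau>
  proof
    fix i
    show "\<tau> i = ?\<sigma> i"
    proof (cases "i \<in> I")
      case True
      then have "\<tau> i \<in> I" "g (\<tau> i) = T (g i)"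
        using \<tau> by (simp_all add: permutes_in_image)
      then show ?thesis
        using True g by (simp add: bij_betw_def inv_into_f_eq)
    next
      case False
      then show ?thesis
        using \<tau>(1) permutes_not_in by fastforce
    qed
  qed
  show ?thesis
  proof (rule ex1I[of _ ?\<sigma>])
    show "?\<sigma> permutes I \<and> (\<forall>i\<in>I. g (?\<sigma> i) = T (g i))"
      using perm comm ..
  qed (use uniq in blast)
qed

theorem corollary6p2:
  fixes n k :: nat and E :: "nat \<Rightarrow> nat \<Rightarrow> bool" and Gc :: "nat \<Rightarrow> nat set"
    and \<phi> :: "(nat \<Rightarrow> int) \<times> (nat \<times> nat \<Rightarrow> int) \<Rightarrow> (nat \<Rightarrow> int) \<times> (nat \<times> nat \<Rightarrow> int)"
  assumes "simple_graph n E"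
    and "bij_betw Gc {1..k} (components n E)"
    and "\<phi> \<in> iso (G_Gamma n E) (G_Gamma n E)"
  shows "\<exists>!\<sigma>. \<sigma> permutes {1..k}
           \<and> (\<forall>i\<in>{1..k}. \<phi> ` H_sub n E (Gc i) = H_sub n E (Gc (\<sigma> i)))
           \<and> (\<forall>i\<in>{1..k}. induced_iso E (Gc i) (Gc (\<sigma> i)))"
proof -
  let ?T = "component_image n E (ab_matrix \<phi>)"
  note T = automorphism_permutes_components[OF assms(1,3)]
  have Gc: "Gc i \<in> components n E" if "i \<in> {1..k}" for i
    using assms(2) that by (auto simp: bij_betw_def)
  have "(\<forall>i\<in>{1..k}. \<phi> ` H_sub n E (Gc i) = H_sub n E (Gc (\<sigma> i)))
      \<and> (\<forall>i\<in>{1..k}. induced_iso E (Gc i) (Gc (\<sigma> i)))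
      \<longleftrightarrow> (\<forall>i\<in>{1..k}. Gc (\<sigma> i) = ?T (Gc i))" if "\<sigma> permutes {1..k}" for \<sigma>
    using permutes_in_image[OF that] Gc T(2,3) T(1)[THEN bij_betwE]
      H_sub_inj_on_components[OF assms(1)] by metis
  then show ?thesis
    using ex1_permutes_conjugate[OF assms(2) T(1)] by (simp cong: conj_cong)
qed

end
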